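(* Let $d$ be an odd integer, $d\ge 3$, and let $G=\langle\sigma,\tau\rangle$ be the dihedral group with $\tau$ of order $d$, $\sigma$ of order $2$ and $\sigma\tau=\tau^{-1}\sigma$. In $\mathbb{Z}[G]$ put $T_\sigma=1+\sigma$, $T_\tau=\sum_{i=0}^{d-1}\tau^i$, $\mathcal{B}=1-\sigma\tau$, and consider the left ideals (left $\mathbb{Z}[G]$-modules) $M_1=\mathbb{Z}[G]T_\sigma T_\tau$, $M_2=\mathbb{Z}[G]T_\sigma$, $M_3=\mathbb{Z}[G]\mathcal{B}$, $M_4=\mathbb{Z}[G]\mathcal{B}T_\tau$, with maps $d_1:M_1\to M_2$ the inclusion, $d_2:M_2\to M_3$, $x\mapsto x(1-\tau)$, $d_3:M_3\to M_4$, $x\mapsto xT_\tau$, and homotopies $h_1:M_2\to M_1$, $x\mapsto xT_\tau$, $h_2:M_3\to M_2$ given by $h_2(x\mathcal{B})=x\sum_{i=0}^{d-1}\big(\tfrac{d-1}{2}-i\big)\tau^iT_\sigma$ for $x\in\mathbb{Z}[G]$, and $h_3:M_4\to M_3$ the inclusion. Then $0\to M_1\xrightarrow{d_1}M_2\xrightarrow{d_2}M_3\xrightarrow{d_3}M_4\to0$ is exact, all of $d_1,d_2,d_3,h_1,h_2,h_3$ are well-defined $\mathbb{Z}[G]$-module homomorphisms, and the prism conditions hold: $h_1d_1=d\cdot\mathrm{id}_{M_1}$, $d_1h_1+h_2d_2=d\cdot\mathrm{id}_{M_2}$, $d_2h_2+h_3d_3=d\cdot\mathrm{id}_{M_3}$,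 $d_3h_3=d\cdot\mathrm{id}_{M_4}$. *)

theory Defs
  imports Main
begin

text \<open>The dihedral group of order 2d: the pair (s,k) stands for sigma^s tau^k
  (s = True meaning sigma^1), with k in {0..<d}.  Relation: tau^k sigma = sigma tau^(-k).\<close>

definition dih_carrier :: "nat \<Rightarrow> (bool \<times> nat) set" where
  "dih_carrier d = UNIV \<times> {..<d}"

fun dih_mult :: "nat \<Rightarrow> bool \<times> nat \<Rightarrow> bool \<times> nat \<Rightarrow> bool \<times> nat" where
  "dih_mult d (s, k) (t, l) = ((s \<noteq> t), ((if t then d - k else k) + l) mod d)"

text \<open>The integral group ring Z[G]: integer-valued functions supported on the group.\<close>

type_synonym zg = "bool \<times> nat \<Rightarrow> int"

definition zg :: "nat \<Rightarrow> zg set" where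
  "zg d = {x. \<forall>g. g \<notin> dih_carrier d \<longrightarrow> x g = 0}"

definition zg_zero :: zg where "zg_zero = (\<lambda>_. 0)"
definition zg_add :: "zg \<Rightarrow> zg \<Rightarrow> zg" where "zg_add x y = (\<lambda>g. x g + y g)"
definition zg_sub :: "zg \<Rightarrow> zg \<Rightarrow> zg" where "zg_sub x y = (\<lambda>g. x g - y g)"
definition zg_smult :: "int \<Rightarrow> zg \<Rightarrow> zg" where "zg_smult c x = (\<lambda>g. c * x g)"
definition zg_sum :: "('i \<Rightarrow> zg) \<Rightarrow> 'i set \<Rightarrow> zg" where
  "zg_sum f I = (\<lambda>g. \<Sum>i\<in>I. f i g)"

definition zg_mult :: "nat \<Rightarrow> zg \<Rightarrow> zg \<Rightarrow> zg" where
  "zg_mult d x y = (\<lambda>g. \<Sum>h\<in>dih_carrier d. \<Sum>k\<in>dih_carrier d.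
       if dih_mult d h k = g then x h * y k else 0)"

definition zg_of :: "bool \<times> nat \<Rightarrow> zg" where
  "zg_of g = (\<lambda>h. if h = g then 1 else 0)"

definition zg_one :: zg where "zg_one = zg_of (False, 0)"
definition sig :: zg where "sig = zg_of (True, 0)"
definition tau_pow :: "nat \<Rightarrow> nat \<Rightarrow> zg" where "tau_pow d i = zg_of (False, i mod d)"

definition T_sig :: zg where "T_sig = zg_add zg_one sig"
definition T_tau :: "nat \<Rightarrow> zg" where "T_tau d = zg_sum (tau_pow d) {..<d}"
definition BB :: "nat \<Rightarrow> zg" where "BB d = zg_sub zg_one (zg_mult d sig (tau_pow d 1))"

definition left_ideal :: "nat \<Rightarrow> zg \<Rightarrow> zg set" where
  "left_ideal d a = {zg_mult d x a | x. x \<in> zg d}"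

definition M1 :: "nat \<Rightarrow> zg set" where "M1 d = left_ideal d (zg_mult d T_sig (T_tau d))"
definition M2 :: "nat \<Rightarrow> zg set" where "M2 d = left_ideal d T_sig"
definition M3 :: "nat \<Rightarrow> zg set" where "M3 d = left_ideal d (BB d)"
definition M4 :: "nat \<Rightarrow> zg set" where "M4 d = left_ideal d (zg_mult d (BB d) (T_tau d))"

definition d1 :: "nat \<Rightarrow> zg \<Rightarrow> zg" where "d1 d x = x"
definition d2 :: "nat \<Rightarrow> zg \<Rightarrow> zg" where "d2 d x = zg_mult d x (zg_sub zg_one (tau_pow d 1))"
definition d3 :: "nat \<Rightarrow> zg \<Rightarrow> zg" where "d3 d x = zg_mult d x (T_tau d)"
definition h1 :: "nat \<Rightarrow> zg \<Rightarrow> zg" where "h1 d x = zg_mult d x (T_tau d)"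

definition h2_elem :: "nat \<Rightarrow> zg" where
  "h2_elem d = zg_sum (\<lambda>i. zg_smult (int ((d - 1) div 2) - int i)
                         (zg_mult d (tau_pow d i) T_sig)) {..<d}"

text \<open>h2(x B) = x * h2_elem, for some representative x (well-definedness is part of the theorem).\<close>
definition h2 :: "nat \<Rightarrow> zg \<Rightarrow> zg" where
  "h2 d y = zg_mult d (SOME x. x \<in> zg d \<and> zg_mult d x (BB d) = y) (h2_elem d)"
definition h3 :: "nat \<Rightarrow> zg \<Rightarrow> zg" where "h3 d x = x"

definition zg_hom :: "nat \<Rightarrow> zg set \<Rightarrow> zg set \<Rightarrow> (zg \<Rightarrow> zg) \<Rightarrow> bool" where
  "zg_hom d M N f \<longleftrightarrow> (\<forall>x\<in>M. f x \<in> N)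
     \<and> (\<forall>x\<in>M. \<forall>y\<in>M. f (zg_add x y) = zg_add (f x) (f y))
     \<and> (\<forall>r\<in>zg d. \<forall>x\<in>M. f (zg_mult d r x) = zg_mult d r (f x))"

end

(*
  Everything reduces to identities between a few elements of Z[G], checked coefficientwise.
  Since T_sig sig = T_sig, one has T_sig (1 - tau) = T_sig B, so d2 maps M2 into M3; together with
  (1 - tau) T_tau = 0 and T_tau^2 = d T_tau this gives d2 d1 = 0, d3 d2 = 0 and the two outer
  prism identities.  For odd d the weights c_i = (d - 1)/2 - i satisfy c_i + c_(d-1-i) = 0, whence
    T_sig (T_tau + h2_elem) = d T_sig,   h2_elem (1 - tau) + B T_tau = d B,   (sig tau) h2_elem = - h2_elem.
  The first two are the middle prism identities.  The last makes h2 well defined: B (sig tau) = - B,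
  so x B = 0 forces x (sig tau) = x and then x h2_elem = - x h2_elem.
  Exactness: an element of M2 killed by 1 - tau is invariant under right multiplication by tau and
  sig, hence a multiple of T_sig T_tau.  If y in M3 satisfies y T_tau = 0, its tau-coefficients sum
  to 0, so they are cyclic differences v_k - v_(k-1); then z = (sum_k v_k tau^k) T_sig lies in M2
  and z (1 - tau) = y.
*)

theory Submission
  imports Defs
begin

section \<open>The dihedral group\<close>

definition dih_inv :: "nat \<Rightarrow> bool \<times> nat \<Rightarrow> bool \<times> nat" where
  "dih_inv d g = (fst g, if fst g then snd g else (d - snd g) mod d)"

lemma dih_carrier_iff: "g \<in> dih_carrier d \<longleftrightarrow> snd g < d"
  by (cases g) (auto simp: dih_carrier_def)

lemma finite_dih_carrier: "finite (dih_carrier d)"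
  by (simp add: dih_carrier_def)

lemma sum_dih_carrier:
  "(\<Sum>g\<in>dih_carrier d. f g) = (\<Sum>k<d. f (False, k)) + (\<Sum>k<d. f (True, k))"
proof -
  have "(\<Sum>g\<in>dih_carrier d. f g) = (\<Sum>s\<in>UNIV. \<Sum>k<d. f (s, k))"
    unfolding dih_carrier_def by (simp add: sum.cartesian_product)
  then show ?thesis
    by (simp add: UNIV_bool)
qed

lemma dih_mult_closed: "0 < d \<Longrightarrow> dih_mult d g h \<in> dih_carrier d"
  by (cases g; cases h) (simp add: dih_carrier_iff)

lemma dih_inv_closed: "g \<in> dih_carrier d \<Longrightarrow> dih_inv d g \<in> dih_carrier d"
  by (cases g) (auto simp: dih_carrier_iff dih_inv_def)

lemma fst_dih_mult: "fst (dih_mult d g h) = (fst g \<noteq> fst h)"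
  by (cases g; cases h) simp

text \<open>Read in \<open>\<int>\<close>, the rotation part of a product no longer involves the truncated
  subtraction \<open>d - k\<close>.\<close>

lemma snd_dih_mult_int:
  assumes "snd g < d"
  shows "int (snd (dih_mult d g h)) = ((if fst h then - 1 else 1) * int (snd g) + int (snd h)) mod int d"
proof -
  have "(x + int d - y) mod int d = (x - y) mod int d" for x y :: int
    by (metis diff_add_eq mod_add_self2)
  with assms show ?thesis
    by (cases g; cases h) (simp add: of_nat_mod algebra_simps)
qed

lemma dih_mult_assoc:
  assumes "a \<in> dih_carrier d" "b \<in> dih_carrier d"
  shows "dih_mult d (dih_mult d a b) c = dih_mult d a (dih_mult d b c)"
proof -
  have "snd a < d" "snd b < d"
    using assms by (simp_all add: dih_carrier_iff)
  moreover have "snd (dih_mult d a b) < d"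
    using dih_mult_closed[of d a b] \<open>snd a < d\<close> by (simp add: dih_carrier_iff)
  ultimately have "int (snd (dih_mult d (dih_mult d a b) c)) = int (snd (dih_mult d a (dih_mult d b c)))"
    by (simp only: snd_dih_mult_int fst_dih_mult)
      (cases "fst b"; cases "fst c"; simp add: mod_simps algebra_simps)
  then show ?thesis
    by (auto simp: prod_eq_iff fst_dih_mult)
qed

lemma dih_mult_one_left: "g \<in> dih_carrier d \<Longrightarrow> dih_mult d (False, 0) g = g"
  by (cases g) (simp add: dih_carrier_iff)

lemma dih_mult_one_right: "g \<in> dih_carrier d \<Longrightarrow> dih_mult d g (False, 0) = g"
  by (cases g) (simp add: dih_carrier_iff)

lemma dih_mult_inv_left: "g \<in> dih_carrier d \<Longrightarrow> dih_mult d (dih_inv d g) g = (False, 0)"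
  by (cases g) (auto simp: dih_carrier_iff dih_inv_def mod_add_left_eq)

lemma dih_mult_inv_right: "g \<in> dih_carrier d \<Longrightarrow> dih_mult d g (dih_inv d g) = (False, 0)"
  by (cases g) (auto simp: dih_carrier_iff dih_inv_def mod_add_right_eq)

lemma dih_mult_eq_iff_right:
  assumes "h \<in> dih_carrier d" "k \<in> dih_carrier d" "g \<in> dih_carrier d"
  shows "dih_mult d h k = g \<longleftrightarrow> k = dih_mult d (dih_inv d h) g"
proof
  assume "dih_mult d h k = g"
  then show "k = dih_mult d (dih_inv d h) g"
    using assms dih_mult_assoc[where d = d and a = "dih_inv d h" and b = h and c = k]
    by (simp add: dih_inv_closed dih_mult_inv_left dih_mult_one_left)
next
  assume "k = dih_mult d (dih_inv d h) g"
  then show "dih_mult d h k = g"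
    using assms dih_mult_assoc[where d = d and a = h and b = "dih_inv d h" and c = g]
    by (simp add: dih_inv_closed dih_mult_inv_right dih_mult_one_left)
qed

lemma dih_mult_eq_iff_left:
  assumes "h \<in> dih_carrier d" "k \<in> dih_carrier d" "g \<in> dih_carrier d"
  shows "dih_mult d h k = g \<longleftrightarrow> h = dih_mult d g (dih_inv d k)"
proof
  assume "dih_mult d h k = g"
  then show "h = dih_mult d g (dih_inv d k)"
    using assms dih_mult_assoc[where d = d and a = h and b = k and c = "dih_inv d k"]
    by (simp add: dih_mult_inv_right dih_mult_one_right)
next
  assume "h = dih_mult d g (dih_inv d k)"
  then show "dih_mult d h k = g"
    using assms dih_mult_assoc[where d = d and a = g and b = "dih_inv d k" and c = k]
    by (simp add: dih_inv_closed dih_mult_inv_left dih_mult_one_right)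
qed

lemma cyclic_pred_eq:
  fixes k d :: nat
  assumes "k < d"
  shows "(k + (d - 1)) mod d = (if k = 0 then d - 1 else k - 1)"
proof (cases "k = 0")
  case False
  then have "k + (d - 1) = (k - 1) + d"
    using assms by simp
  then have "(k + (d - 1)) mod d = k - 1"
    using assms by (metis less_imp_diff_less mod_add_self2 mod_less)
  then show ?thesis
    using False by simp
qed (use assms in simp)

lemma cyclic_succ_eq:
  fixes k d :: nat
  assumes "k < d"
  shows "(1 + k) mod d = (if k = d - 1 then 0 else k + 1)"
proof -
  consider "k = d - 1" | "1 + k < d"
    using assms by linarith
  then show ?thesis
    using assms by cases simp_all
qed

lemma cyclic_neg_pred_eq:
  fixes k d :: nat
  assumes "k < d" "1 < d"
  shows "(d - (k + (d - 1)) mod d) mod d = (d - k + 1) mod d"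
  unfolding cyclic_pred_eq[OF assms(1)] using assms by (simp add: mod_Suc Suc_diff_le)

lemma cyclic_pred_neg_succ_eq:
  fixes k d :: nat
  assumes "k < d" "1 < d"
  shows "((d - k + 1) mod d + (d - 1)) mod d = (d - k) mod d"
proof -
  consider "k = 0" | "k = 1" | "2 \<le> k"
    by linarith
  then show ?thesis
  proof cases
    case 3
    then have "(d - k + 1) mod d + (d - 1) = (d - k) + d"
      using assms by simp
    then show ?thesis
      by simp
  qed (use assms in \<open>simp_all add: mod_Suc\<close>)
qed

lemma exists_cyclic_antidifference:
  fixes a :: "nat \<Rightarrow> int"
  assumes "0 < d" "(\<Sum>j<d. a j) = 0"
  obtains v where "\<And>k. k < d \<Longrightarrow> v k - v ((k + (d - 1)) mod d) = a k"
proof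
  define v where "v k = (\<Sum>j<k. a (Suc j))" for k
  fix k assume k: "k < d"
  show "v k - v ((k + (d - 1)) mod d) = a k"
  proof (cases k)
    case 0
    have "(\<Sum>j<Suc (d - 1). a j) = a 0 + v (d - 1)"
      unfolding v_def by (rule sum.lessThan_Suc_shift)
    then show ?thesis
      using assms 0 by (simp add: v_def)
  next
    case (Suc i)
    then have "(k + (d - 1)) mod d = i"
      using k by (simp add: mod_if)
    then show ?thesis
      using Suc by (simp add: v_def)
  qed
qed

section \<open>The integral group ring\<close>

lemma zg_outside: "x \<in> zg d \<Longrightarrow> g \<notin> dih_carrier d \<Longrightarrow> x g = 0"
  unfolding zg_def by blast

lemma zg_eqI:
  assumes "x \<in> zg d" "y \<in> zg d" "\<And>s k. k < d \<Longrightarrow> x (s, k) = y (s, k)"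
  shows "x = y"
proof
  fix g
  show "x g = y g"
    using assms by (cases g) (metis dih_carrier_iff snd_conv zg_outside)
qed

lemma zg_add_closed: "x \<in> zg d \<Longrightarrow> y \<in> zg d \<Longrightarrow> zg_add x y \<in> zg d"
  by (simp add: zg_def zg_add_def)

lemma zg_sub_closed: "x \<in> zg d \<Longrightarrow> y \<in> zg d \<Longrightarrow> zg_sub x y \<in> zg d"
  by (simp add: zg_def zg_sub_def)

lemma zg_smult_closed: "x \<in> zg d \<Longrightarrow> zg_smult c x \<in> zg d"
  by (simp add: zg_def zg_smult_def)

lemma zg_of_closed: "g \<in> dih_carrier d \<Longrightarrow> zg_of g \<in> zg d"
  by (auto simp: zg_def zg_of_def)

lemma zg_one_closed: "0 < d \<Longrightarrow> zg_one \<in> zg d"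
  by (simp add: zg_one_def zg_of_closed dih_carrier_iff)

lemma zg_mult_outside:
  assumes "0 < d" "g \<notin> dih_carrier d"
  shows "zg_mult d x y g = 0"
proof -
  have "dih_mult d h k \<noteq> g" for h k
    using assms dih_mult_closed by metis
  then show ?thesis
    by (simp add: zg_mult_def)
qed

lemma zg_mult_closed: "0 < d \<Longrightarrow> zg_mult d x y \<in> zg d"
  by (simp add: zg_def zg_mult_outside)

lemma zg_mult_apply_sum_fst:
  assumes "0 < d" "g \<in> dih_carrier d"
  shows "zg_mult d x y g = (\<Sum>h\<in>dih_carrier d. x h * y (dih_mult d (dih_inv d h) g))"
  unfolding zg_mult_def
proof (rule sum.cong[OF refl])
  fix h assume h: "h \<in> dih_carrier d"
  have "(\<Sum>k\<in>dih_carrier d. if dih_mult d h k = g then x h * y k else 0)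
      = (\<Sum>k\<in>dih_carrier d. if k = dih_mult d (dih_inv d h) g then x h * y k else 0)"
    by (rule sum.cong[OF refl]) (simp add: dih_mult_eq_iff_right[OF h _ assms(2)])
  then show "(\<Sum>k\<in>dih_carrier d. if dih_mult d h k = g then x h * y k else 0)
      = x h * y (dih_mult d (dih_inv d h) g)"
    using dih_mult_closed[OF assms(1)] by (simp add: finite_dih_carrier)
qed

lemma zg_mult_apply_sum_snd:
  assumes "0 < d" "g \<in> dih_carrier d"
  shows "zg_mult d x y g = (\<Sum>k\<in>dih_carrier d. x (dih_mult d g (dih_inv d k)) * y k)"
  unfolding zg_mult_def
proof (subst sum.swap, rule sum.cong[OF refl])
  fix k assume k: "k \<in> dih_carrier d"
  have "(\<Sum>h\<in>dih_carrier d. if dih_mult d h k = g then x h * y k else 0)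
      = (\<Sum>h\<in>dih_carrier d. if h = dih_mult d g (dih_inv d k) then x h * y k else 0)"
    by (rule sum.cong[OF refl]) (simp add: dih_mult_eq_iff_left[OF _ k assms(2)])
  then show "(\<Sum>h\<in>dih_carrier d. if dih_mult d h k = g then x h * y k else 0)
      = x (dih_mult d g (dih_inv d k)) * y k"
    using dih_mult_closed[OF assms(1)] by (simp add: finite_dih_carrier)
qed

lemma sum_mult_zg_of: "finite A \<Longrightarrow> g \<in> A \<Longrightarrow> (\<Sum>k\<in>A. f k * zg_of g k) = f g"
  by (simp add: zg_of_def if_distrib[of "times _"] cong: if_cong)

lemma sum_zg_of_mult: "finite A \<Longrightarrow> g \<in> A \<Longrightarrow> (\<Sum>k\<in>A. zg_of g k * f k) = f g"
  using sum_mult_zg_of[of A g f] by (simp add: mult.commute)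

lemma zg_mult_of_right:
  "0 < d \<Longrightarrow> g \<in> dih_carrier d \<Longrightarrow> h \<in> dih_carrier d \<Longrightarrow>
    zg_mult d x (zg_of g) h = x (dih_mult d h (dih_inv d g))"
  by (simp add: zg_mult_apply_sum_snd finite_dih_carrier sum_mult_zg_of)

lemma zg_mult_of_left:
  "0 < d \<Longrightarrow> g \<in> dih_carrier d \<Longrightarrow> h \<in> dih_carrier d \<Longrightarrow>
    zg_mult d (zg_of g) y h = y (dih_mult d (dih_inv d g) h)"
  by (simp add: zg_mult_apply_sum_fst finite_dih_carrier sum_zg_of_mult)

lemma zg_mult_of_of:
  assumes "0 < d" "a \<in> dih_carrier d" "b \<in> dih_carrier d"
  shows "zg_mult d (zg_of a) (zg_of b) = zg_of (dih_mult d a b)"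
proof (rule zg_eqI[OF zg_mult_closed[OF assms(1)] zg_of_closed[OF dih_mult_closed[OF assms(1)]]])
  fix s k assume "k < d"
  then have "(s, k) \<in> dih_carrier d"
    by (simp add: dih_carrier_iff)
  with assms show "zg_mult d (zg_of a) (zg_of b) (s, k) = zg_of (dih_mult d a b) (s, k)"
    using dih_mult_eq_iff_right[of a d b "(s, k)"] by (simp add: zg_mult_of_left) (auto simp: zg_of_def)
qed

lemma zg_mult_assoc:
  assumes d: "0 < d"
  shows "zg_mult d (zg_mult d x y) z = zg_mult d x (zg_mult d y z)"
proof (rule zg_eqI[OF zg_mult_closed[OF d] zg_mult_closed[OF d]])
  fix s k assume "k < d"
  then have g: "(s, k) \<in> dih_carrier d"
    by (simp add: dih_carrier_iff)
  let ?C = "dih_carrier d" and ?i = "dih_inv d" and ?m = "dih_mult d"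
  have "zg_mult d (zg_mult d x y) z (s, k)
      = (\<Sum>l\<in>?C. \<Sum>h\<in>?C. x h * y (?m (?i h) (?m (s, k) (?i l))) * z l)"
    by (simp add: zg_mult_apply_sum_snd[OF d g] zg_mult_apply_sum_fst[OF d] dih_mult_closed[OF d]
        sum_distrib_right)
  also have "\<dots> = (\<Sum>h\<in>?C. \<Sum>l\<in>?C. x h * y (?m (?m (?i h) (s, k)) (?i l)) * z l)"
    by (subst sum.swap) (simp add: dih_mult_assoc d g dih_inv_closed)
  also have "\<dots> = zg_mult d x (zg_mult d y z) (s, k)"
    by (simp add: zg_mult_apply_sum_fst[OF d g] zg_mult_apply_sum_snd[OF d] dih_mult_closed[OF d]
        sum_distrib_left mult.assoc)
  finally show "zg_mult d (zg_mult d x y) z (s, k) = zg_mult d x (zg_mult d y z) (s, k)" .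
qed

lemma zg_mult_add_left: "zg_mult d (zg_add x y) z = zg_add (zg_mult d x z) (zg_mult d y z)"
  unfolding zg_mult_def zg_add_def
  by (rule ext, simp only: sum.distrib[symmetric], intro sum.cong refl, simp add: distrib_right)

lemma zg_mult_add_right: "zg_mult d z (zg_add x y) = zg_add (zg_mult d z x) (zg_mult d z y)"
  unfolding zg_mult_def zg_add_def
  by (rule ext, simp only: sum.distrib[symmetric], intro sum.cong refl, simp add: distrib_left)

lemma zg_mult_sub_left: "zg_mult d (zg_sub x y) z = zg_sub (zg_mult d x z) (zg_mult d y z)"
  unfolding zg_mult_def zg_sub_def
  by (rule ext, simp only: sum_subtractf[symmetric], intro sum.cong refl, simp add: left_diff_distrib)

lemma zg_mult_sub_right: "zg_mult d z (zg_sub x y) = zg_sub (zg_mult d z x) (zg_mult d z y)"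
  unfolding zg_mult_def zg_sub_def
  by (rule ext, simp only: sum_subtractf[symmetric], intro sum.cong refl, simp add: right_diff_distrib)

lemma zg_mult_smult_left: "zg_mult d (zg_smult c x) y = zg_smult c (zg_mult d x y)"
  by (simp add: zg_mult_def zg_smult_def fun_eq_iff sum_distrib_left if_distrib mult.assoc
      cong: if_cong)

lemma zg_mult_smult_right: "zg_mult d x (zg_smult c y) = zg_smult c (zg_mult d x y)"
  by (simp add: zg_mult_def zg_smult_def fun_eq_iff sum_distrib_left if_distrib mult.left_commute
      cong: if_cong)

lemma zg_mult_zero_right: "zg_mult d x zg_zero = zg_zero"
  by (simp add: zg_mult_def zg_zero_def fun_eq_iff cong: if_cong)

lemma zg_mult_sum_left:
  assumes "0 < d"
  shows "zg_mult d (zg_sum f I) y = zg_sum (\<lambda>i. zg_mult d (f i) y) I"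
proof
  fix g
  show "zg_mult d (zg_sum f I) y g = zg_sum (\<lambda>i. zg_mult d (f i) y) I g"
  proof (cases "g \<in> dih_carrier d")
    case True
    then show ?thesis
      by (simp add: zg_mult_apply_sum_fst[OF assms] zg_sum_def sum_distrib_right) (rule sum.swap)
  qed (simp add: assms zg_mult_outside zg_sum_def)
qed

lemma zg_mult_one_left: "0 < d \<Longrightarrow> x \<in> zg d \<Longrightarrow> zg_mult d zg_one x = x"
  by (rule zg_eqI[OF zg_mult_closed])
    (simp_all add: zg_one_def zg_mult_of_left dih_carrier_iff dih_inv_def)

lemma zg_mult_one_right: "0 < d \<Longrightarrow> x \<in> zg d \<Longrightarrow> zg_mult d x zg_one = x"
  by (rule zg_eqI[OF zg_mult_closed])
    (simp_all add: zg_one_def zg_mult_of_right dih_carrier_iff dih_inv_def)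

lemma mem_left_ideal_iff: "y \<in> left_ideal d a \<longleftrightarrow> (\<exists>x\<in>zg d. y = zg_mult d x a)"
  unfolding left_ideal_def by auto

lemma left_ideal_closed: "0 < d \<Longrightarrow> y \<in> left_ideal d a \<Longrightarrow> y \<in> zg d"
  unfolding left_ideal_def using zg_mult_closed by blast

lemma left_ideal_mult_right:
  "0 < d \<Longrightarrow> y \<in> left_ideal d a \<Longrightarrow> zg_mult d y b \<in> left_ideal d (zg_mult d a b)"
  unfolding left_ideal_def by (auto simp: zg_mult_assoc)

lemma zg_hom_mult_right:
  assumes "0 < d" "\<And>x. x \<in> M \<Longrightarrow> zg_mult d x c \<in> N"
  shows "zg_hom d M N (\<lambda>x. zg_mult d x c)"
  using assms by (simp add: zg_hom_def zg_mult_add_left zg_mult_assoc)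

lemma zg_hom_inclusion: "M \<subseteq> N \<Longrightarrow> zg_hom d M N (\<lambda>x. x)"
  unfolding zg_hom_def by auto

abbreviation sig_tau :: zg where
  "sig_tau \<equiv> zg_of (True, 1)"

abbreviation one_minus_tau :: "nat \<Rightarrow> zg" where
  "one_minus_tau d \<equiv> zg_sub zg_one (tau_pow d 1)"

lemma T_tau_apply: "T_tau d (s, k) = (if \<not> s \<and> k < d then 1 else 0)"
proof -
  have "T_tau d (s, k) = (\<Sum>i<d. if i = k then (if s then 0 else 1) else 0)"
    unfolding T_tau_def zg_sum_def tau_pow_def zg_of_def by (rule sum.cong) auto
  then show ?thesis
    by simp
qed

lemma T_sig_apply: "T_sig (s, k) = (if k = 0 then 1 else 0)"
  by (auto simp: T_sig_def zg_add_def zg_one_def sig_def zg_of_def)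

lemma sig_mult_tau: "1 < d \<Longrightarrow> zg_mult d sig (tau_pow d 1) = sig_tau"
  unfolding sig_def tau_pow_def by (subst zg_mult_of_of) (auto simp: dih_carrier_iff)

lemma BB_apply:
  assumes "1 < d"
  shows "BB d (s, k) = (if (s, k) = (False, 0) then 1 else if (s, k) = (True, 1) then -1 else 0)"
  unfolding BB_def sig_mult_tau[OF assms] by (simp add: zg_sub_def zg_one_def zg_of_def)

lemma one_minus_tau_apply:
  "1 < d \<Longrightarrow>
    one_minus_tau d (s, k) = (if (s, k) = (False, 0) then 1 else if (s, k) = (False, 1) then -1 else 0)"
  by (simp add: tau_pow_def zg_sub_def zg_one_def zg_of_def)

lemma T_tau_closed: "T_tau d \<in> zg d"
  by (simp add: zg_def T_tau_apply dih_carrier_def split: prod.split)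

lemma T_sig_closed: "0 < d \<Longrightarrow> T_sig \<in> zg d"
  by (simp add: zg_def T_sig_apply dih_carrier_def split: prod.split)

lemma BB_closed: "1 < d \<Longrightarrow> BB d \<in> zg d"
  by (simp add: zg_def BB_apply dih_carrier_def split: prod.split)

lemma zg_mult_sig_apply: "k < d \<Longrightarrow> zg_mult d x sig (s, k) = x (\<not> s, (d - k) mod d)"
  by (simp add: sig_def zg_mult_of_right dih_carrier_iff dih_inv_def)

lemma zg_mult_T_sig_apply:
  "x \<in> zg d \<Longrightarrow> k < d \<Longrightarrow> zg_mult d x T_sig (s, k) = x (s, k) + x (\<not> s, (d - k) mod d)"
  unfolding T_sig_def zg_mult_add_right by (simp add: zg_mult_one_right zg_add_def zg_mult_sig_apply)

lemma zg_mult_tau_apply: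
  "1 < d \<Longrightarrow> k < d \<Longrightarrow> zg_mult d x (tau_pow d 1) (s, k) = x (s, (k + (d - 1)) mod d)"
  by (simp add: tau_pow_def zg_mult_of_right dih_carrier_iff dih_inv_def)

lemma zg_mult_one_minus_tau_apply:
  assumes "1 < d" "x \<in> zg d" "k < d"
  shows "zg_mult d x (one_minus_tau d) (s, k) = x (s, k) - x (s, (k + (d - 1)) mod d)"
  using zg_mult_tau_apply[OF assms(1,3), of x s] assms
  unfolding zg_mult_sub_right by (simp add: zg_mult_one_right zg_sub_def)

lemma zg_mult_sig_tau_apply:
  "1 < d \<Longrightarrow> k < d \<Longrightarrow> zg_mult d x sig_tau (s, k) = x (\<not> s, (d - k + 1) mod d)"
  by (simp add: zg_mult_of_right dih_carrier_iff dih_inv_def)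

lemma zg_sig_tau_mult_apply:
  "1 < d \<Longrightarrow> k < d \<Longrightarrow>
    zg_mult d sig_tau x (s, k) = x (\<not> s, ((if s then d - 1 else 1) + k) mod d)"
  by (simp add: zg_mult_of_left dih_carrier_iff dih_inv_def)

lemma zg_T_sig_mult_apply:
  "x \<in> zg d \<Longrightarrow> k < d \<Longrightarrow> zg_mult d T_sig x (s, k) = x (s, k) + x (\<not> s, k)"
  unfolding T_sig_def zg_mult_add_left
  by (simp add: zg_mult_one_left zg_add_def sig_def zg_mult_of_left dih_carrier_iff dih_inv_def)

lemma zg_mult_T_tau_apply:
  assumes "k < d"
  shows "zg_mult d x (T_tau d) (s, k) = (\<Sum>j<d. x (s, j))"
proof -
  have "zg_mult d x (T_tau d) (s, k)
      = (\<Sum>h\<in>dih_carrier d. x h * T_tau d (dih_mult d (dih_inv d h) (s, k)))"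
    using assms by (simp add: zg_mult_apply_sum_fst dih_carrier_iff)
  also have "\<dots> = (\<Sum>h\<in>dih_carrier d. if fst h = s then x h else 0)"
    by (rule sum.cong[OF refl]) (auto simp: T_tau_apply dih_inv_def dih_carrier_iff assms)
  finally show ?thesis
    by (cases s) (simp_all add: sum_dih_carrier)
qed

lemma zg_T_tau_mult_apply:
  assumes "k < d"
  shows "zg_mult d (T_tau d) x (s, k) = (\<Sum>j<d. x (s, j))"
proof -
  have "zg_mult d (T_tau d) x (s, k)
      = (\<Sum>h\<in>dih_carrier d. T_tau d (dih_mult d (s, k) (dih_inv d h)) * x h)"
    using assms by (simp add: zg_mult_apply_sum_snd dih_carrier_iff)
  also have "\<dots> = (\<Sum>h\<in>dih_carrier d. if fst h = s then x h else 0)"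
    by (rule sum.cong[OF refl]) (auto simp: T_tau_apply dih_inv_def dih_carrier_iff assms)
  finally show ?thesis
    by (cases s) (simp_all add: sum_dih_carrier)
qed

lemma T_tau_central: "0 < d \<Longrightarrow> zg_mult d (T_tau d) x = zg_mult d x (T_tau d)"
  by (rule zg_eqI[OF zg_mult_closed zg_mult_closed])
    (simp_all add: zg_mult_T_tau_apply zg_T_tau_mult_apply)

definition h2_coeff :: "nat \<Rightarrow> nat \<Rightarrow> int" where
  "h2_coeff d i = int ((d - 1) div 2) - int i"

definition h2_factor :: "nat \<Rightarrow> zg" where
  "h2_factor d = zg_sum (\<lambda>i. zg_smult (h2_coeff d i) (tau_pow d i)) {..<d}"

definition tau_poly :: "nat \<Rightarrow> (nat \<Rightarrow> int) \<Rightarrow> zg" where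
  "tau_poly d v = (\<lambda>(s, k). if \<not> s \<and> k < d then v k else 0)"

lemma tau_poly_closed: "tau_poly d v \<in> zg d"
  by (simp add: zg_def tau_poly_def dih_carrier_def)

lemma tau_poly_mult_T_sig_apply:
  assumes "0 < d" "k < d"
  shows "zg_mult d (tau_poly d v) T_sig (s, k) = (if s then v ((d - k) mod d) else v k)"
  unfolding zg_mult_T_sig_apply[OF tau_poly_closed assms(2)] using assms by (simp add: tau_poly_def)

lemma h2_elem_eq: "0 < d \<Longrightarrow> h2_elem d = zg_mult d (h2_factor d) T_sig"
  by (simp add: h2_elem_def h2_factor_def h2_coeff_def zg_mult_sum_left zg_mult_smult_left)

lemma h2_factor_eq_tau_poly: "h2_factor d = tau_poly d (h2_coeff d)"
proof
  fix g :: "bool \<times> nat"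
  obtain s k where g: "g = (s, k)"
    by (cases g)
  have "h2_factor d (s, k) = (\<Sum>i<d. if i = k \<and> \<not> s then h2_coeff d i else 0)"
    unfolding h2_factor_def zg_sum_def zg_smult_def tau_pow_def zg_of_def
    by (rule sum.cong) auto
  then show "h2_factor d g = tau_poly d (h2_coeff d) g"
    by (simp add: g tau_poly_def)
qed

lemma h2_elem_closed: "0 < d \<Longrightarrow> h2_elem d \<in> zg d"
  by (simp add: h2_elem_eq zg_mult_closed)

lemma h2_elem_apply_False: "0 < d \<Longrightarrow> k < d \<Longrightarrow> h2_elem d (False, k) = h2_coeff d k"
  by (simp add: h2_elem_eq h2_factor_eq_tau_poly tau_poly_mult_T_sig_apply)

lemma h2_elem_apply_True:
  "0 < d \<Longrightarrow> k < d \<Longrightarrow> h2_elem d (True, k) = h2_coeff d (if k = 0 then 0 else d - k)"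
  by (simp add: h2_elem_eq h2_factor_eq_tau_poly tau_poly_mult_T_sig_apply mod_if)

section \<open>The complex for \<open>1 < d\<close>\<close>

locale dihedral =
  fixes d :: nat
  assumes d_gt_1: "1 < d"
begin

lemma d_pos: "0 < d"
  using d_gt_1 by simp

lemma T_sig_mult_sig: "zg_mult d T_sig sig = T_sig"
  by (rule zg_eqI[OF zg_mult_closed[OF d_pos] T_sig_closed[OF d_pos]])
    (auto simp: zg_mult_sig_apply T_sig_apply mod_if)

lemma T_sig_mult_one_minus_tau: "zg_mult d T_sig (one_minus_tau d) = zg_mult d T_sig (BB d)"
proof -
  have T_sig: "zg_mult d T_sig zg_one = T_sig"
    by (rule zg_mult_one_right[OF d_pos T_sig_closed[OF d_pos]])
  have "zg_mult d T_sig (BB d) = zg_sub T_sig (zg_mult d (zg_mult d T_sig sig) (tau_pow d 1))"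
    unfolding BB_def zg_mult_sub_right zg_mult_assoc[OF d_pos] T_sig ..
  then show ?thesis
    unfolding T_sig_mult_sig zg_mult_sub_right T_sig ..
qed

lemma BB_mult_sig_tau: "zg_mult d (BB d) sig_tau = zg_smult (-1) (BB d)"
proof (rule zg_eqI[OF zg_mult_closed[OF d_pos] zg_smult_closed[OF BB_closed[OF d_gt_1]]])
  fix s k assume k: "k < d"
  show "zg_mult d (BB d) sig_tau (s, k) = zg_smult (-1) (BB d) (s, k)"
    unfolding zg_mult_sig_tau_apply[OF d_gt_1 k]
    using d_gt_1 k by (auto simp: BB_apply zg_smult_def mod_if)
qed

lemma T_tau_mult_T_tau: "zg_mult d (T_tau d) (T_tau d) = zg_smult (int d) (T_tau d)"
  by (rule zg_eqI[OF zg_mult_closed[OF d_pos] zg_smult_closed[OF T_tau_closed]])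
    (simp add: zg_mult_T_tau_apply zg_smult_def T_tau_apply)

lemma one_minus_tau_mult_T_tau: "zg_mult d (one_minus_tau d) (T_tau d) = zg_zero"
proof (rule zg_eqI[OF zg_mult_closed[OF d_pos]])
  show "zg_zero \<in> zg d"
    by (simp add: zg_def zg_zero_def)
  fix s k assume "k < d"
  have "(\<Sum>j<d. one_minus_tau d (s, j))
      = (\<Sum>j<d. (if j = 0 \<and> \<not> s then 1 else 0) - (if j = 1 \<and> \<not> s then 1 else 0))"
    using one_minus_tau_apply[OF d_gt_1] by (intro sum.cong) auto
  also have "\<dots> = 0"
    using d_gt_1 by (cases s) (simp_all add: sum_subtractf)
  finally show "zg_mult d (one_minus_tau d) (T_tau d) (s, k) = zg_zero (s, k)"
    by (simp add: zg_mult_T_tau_apply \<open>k < d\<close> zg_zero_def)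
qed

lemma T_sig_mult_T_tau_apply: "k < d \<Longrightarrow> zg_mult d T_sig (T_tau d) (s, k) = 1"
  by (simp add: zg_T_sig_mult_apply T_tau_closed T_tau_apply)

lemma BB_mult_T_tau_apply:
  assumes k: "k < d"
  shows "zg_mult d (BB d) (T_tau d) (s, k) = (if s then -1 else 1)"
proof -
  have "(\<Sum>j<d. BB d (s, j))
      = (\<Sum>j<d. (if j = 0 \<and> \<not> s then 1 else 0) - (if j = 1 \<and> s then 1 else 0))"
    using BB_apply[OF d_gt_1] by (intro sum.cong) auto
  also have "\<dots> = (if s then -1 else 1)"
    using d_gt_1 by (cases s) (simp_all add: sum_subtractf sum_negf)
  finally show ?thesis
    by (simp add: zg_mult_T_tau_apply k)
qed

lemma T_tau_mult_one_minus_tau: "zg_mult d (T_tau d) (one_minus_tau d) = zg_zero"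
  using T_tau_central[OF d_pos] one_minus_tau_mult_T_tau by simp

lemma M1_subset_M2: "M1 d \<subseteq> M2 d"
proof
  fix y assume "y \<in> M1 d"
  then obtain x where y: "y = zg_mult d x (zg_mult d T_sig (T_tau d))"
    unfolding M1_def mem_left_ideal_iff by blast
  have "y = zg_mult d (zg_mult d x (T_tau d)) T_sig"
    unfolding y zg_mult_assoc[OF d_pos] T_tau_central[OF d_pos] ..
  then show "y \<in> M2 d"
    unfolding M2_def mem_left_ideal_iff using zg_mult_closed[OF d_pos] by blast
qed

lemma M4_subset_M3: "M4 d \<subseteq> M3 d"
proof
  fix y assume "y \<in> M4 d"
  then obtain x where y: "y = zg_mult d x (zg_mult d (BB d) (T_tau d))"
    unfolding M4_def mem_left_ideal_iff by blast
  have "y = zg_mult d (zg_mult d x (T_tau d)) (BB d)"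
    unfolding y zg_mult_assoc[OF d_pos] T_tau_central[OF d_pos] ..
  then show "y \<in> M3 d"
    unfolding M3_def mem_left_ideal_iff using zg_mult_closed[OF d_pos] by blast
qed

lemma M2_mult_sig: "y \<in> M2 d \<Longrightarrow> zg_mult d y sig = y"
  unfolding M2_def mem_left_ideal_iff by (auto simp: zg_mult_assoc[OF d_pos] T_sig_mult_sig)

lemma M2_mult_one_minus_tau: "y \<in> M2 d \<Longrightarrow> zg_mult d y (one_minus_tau d) = zg_mult d y (BB d)"
  unfolding M2_def mem_left_ideal_iff
  by (auto simp only: zg_mult_assoc[OF d_pos] T_sig_mult_one_minus_tau)

lemma M3_mult_sig_tau: "y \<in> M3 d \<Longrightarrow> zg_mult d y sig_tau = zg_smult (-1) y"
  unfolding M3_def mem_left_ideal_iff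
  by (auto simp only: zg_mult_assoc[OF d_pos] BB_mult_sig_tau zg_mult_smult_right)

lemma d2_into_M3: "y \<in> M2 d \<Longrightarrow> d2 d y \<in> M3 d"
  unfolding d2_def M2_mult_one_minus_tau M3_def mem_left_ideal_iff
  using left_ideal_closed[OF d_pos] unfolding M2_def by blast

lemma d3_into_M4: "y \<in> M3 d \<Longrightarrow> d3 d y \<in> M4 d"
  unfolding d3_def M3_def M4_def by (rule left_ideal_mult_right[OF d_pos])

lemma h1_into_M1: "y \<in> M2 d \<Longrightarrow> h1 d y \<in> M1 d"
  unfolding h1_def M2_def M1_def by (rule left_ideal_mult_right[OF d_pos])

lemma ker_d2_constant:
  assumes y: "y \<in> M2 d" and y0: "d2 d y = zg_zero" and k: "k < d"
  shows "y (s, k) = y (False, 0)"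
proof -
  have yz: "y \<in> zg d"
    using y left_ideal_closed[OF d_pos] unfolding M2_def by blast
  have tau_inv: "y (s, (k + (d - 1)) mod d) = y (s, k)" if "k < d" for s k
    using zg_mult_one_minus_tau_apply[OF d_gt_1 yz that, of s] y0
    by (simp add: d2_def zg_zero_def)
  have const_False: "y (False, k) = y (False, 0)" if "k < d" for k
    using that
  proof (induction k)
    case (Suc k)
    then have "(Suc k + (d - 1)) mod d = k"
      using d_pos by (simp add: mod_if)
    then show ?case
      using Suc tau_inv[of "Suc k" False] by simp
  qed simp
  show ?thesis
  proof (cases s)
    case True
    have "(d - k) mod d < d"
      using d_pos by simp
    then show ?thesis
      using True zg_mult_sig_apply[OF k, of y True] M2_mult_sig[OF y]
        const_False[of "(d - k) mod d"] by simp
  qed (simp add: const_False[OF k])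
qed

lemma ker_d2_subset_M1:
  assumes y: "y \<in> M2 d" and y0: "d2 d y = zg_zero"
  shows "y \<in> M1 d"
proof -
  let ?c = "y (False, 0)"
  have "y = zg_smult ?c (zg_mult d T_sig (T_tau d))"
  proof (rule zg_eqI[OF _ zg_smult_closed[OF zg_mult_closed[OF d_pos]]])
    show "y \<in> zg d"
      using y left_ideal_closed[OF d_pos] unfolding M2_def by blast
    fix s k assume k: "k < d"
    show "y (s, k) = zg_smult ?c (zg_mult d T_sig (T_tau d)) (s, k)"
      unfolding zg_smult_def T_sig_mult_T_tau_apply[OF k] ker_d2_constant[OF y y0 k] by simp
  qed
  also have "\<dots> = zg_mult d (zg_smult ?c zg_one) (zg_mult d T_sig (T_tau d))"
    by (simp add: zg_mult_smult_left zg_mult_one_left[OF d_pos zg_mult_closed[OF d_pos]])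
  finally show ?thesis
    unfolding M1_def mem_left_ideal_iff using zg_smult_closed[OF zg_one_closed[OF d_pos]] by blast
qed

lemma d2_tau_poly_mult_T_sig_apply:
  assumes v: "\<And>k. k < d \<Longrightarrow> v k - v ((k + (d - 1)) mod d) = a k" and k: "k < d"
  shows "d2 d (zg_mult d (tau_poly d v) T_sig) (s, k) = (if s then - a ((d - k + 1) mod d) else a k)"
proof -
  let ?z = "zg_mult d (tau_poly d v) T_sig"
  have d2z: "d2 d ?z (s, k) = ?z (s, k) - ?z (s, (k + (d - 1)) mod d)"
    unfolding d2_def by (rule zg_mult_one_minus_tau_apply[OF d_gt_1 zg_mult_closed[OF d_pos] k])
  have k_pred: "(k + (d - 1)) mod d < d"
    using d_pos by simp
  note z_apply = tau_poly_mult_T_sig_apply[OF d_pos]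
  show ?thesis
  proof (cases s)
    case False
    then show ?thesis
      using d2z z_apply[OF k] z_apply[OF k_pred] v[OF k] by simp
  next
    case True
    let ?j = "(d - k + 1) mod d"
    have "d2 d ?z (s, k) = v ((?j + (d - 1)) mod d) - v ?j"
      using True d2z z_apply[OF k] z_apply[OF k_pred]
      by (simp only: cyclic_pred_neg_succ_eq[OF k d_gt_1] cyclic_neg_pred_eq[OF k d_gt_1] if_True)
    then show ?thesis
      using v[OF mod_less_divisor[OF d_pos, of "d - k + 1"]] True by simp
  qed
qed

lemma ker_d3_subset_image_d2:
  assumes y: "y \<in> M3 d" and y0: "d3 d y = zg_zero"
  shows "y \<in> d2 d ` M2 d"
proof -
  have "(\<Sum>j<d. y (False, j)) = 0"
    using zg_mult_T_tau_apply[OF d_pos, of y False] y0 by (simp add: d3_def zg_zero_def)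
  then obtain v where v: "\<And>k. k < d \<Longrightarrow> v k - v ((k + (d - 1)) mod d) = y (False, k)"
    using exists_cyclic_antidifference[OF d_pos] by blast
  let ?z = "zg_mult d (tau_poly d v) T_sig"
  have "y = d2 d ?z"
  proof (rule zg_eqI)
    show "y \<in> zg d"
      using y left_ideal_closed[OF d_pos] unfolding M3_def by blast
    show "d2 d ?z \<in> zg d"
      unfolding d2_def by (rule zg_mult_closed[OF d_pos])
    fix s k assume k: "k < d"
    have "y (False, (d - k + 1) mod d) = - y (True, k)"
      using zg_mult_sig_tau_apply[OF d_gt_1 k, of y True] M3_mult_sig_tau[OF y]
      by (simp add: zg_smult_def)
    then show "y (s, k) = d2 d ?z (s, k)"
      using d2_tau_poly_mult_T_sig_apply[where a = "\<lambda>k. y (False, k)", OF v k, of s] by simp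
  qed
  moreover have "?z \<in> M2 d"
    unfolding M2_def mem_left_ideal_iff using tau_poly_closed by blast
  ultimately show ?thesis
    by blast
qed

lemma ker_d2_eq_image_d1: "{y \<in> M2 d. d2 d y = zg_zero} = d1 d ` M1 d"
proof
  show "{y \<in> M2 d. d2 d y = zg_zero} \<subseteq> d1 d ` M1 d"
    using ker_d2_subset_M1 by (auto simp: d1_def)
  show "d1 d ` M1 d \<subseteq> {y \<in> M2 d. d2 d y = zg_zero}"
  proof
    fix y assume "y \<in> d1 d ` M1 d"
    then have y: "y \<in> M1 d"
      by (simp add: d1_def)
    then obtain x where "y = zg_mult d x (zg_mult d T_sig (T_tau d))"
      unfolding M1_def mem_left_ideal_iff by blast
    then have "d2 d y = zg_zero"
      by (simp only: d2_def zg_mult_assoc[OF d_pos] T_tau_mult_one_minus_tau zg_mult_zero_right)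
    then show "y \<in> {y \<in> M2 d. d2 d y = zg_zero}"
      using y M1_subset_M2 by blast
  qed
qed

lemma ker_d3_eq_image_d2: "{y \<in> M3 d. d3 d y = zg_zero} = d2 d ` M2 d"
proof
  show "{y \<in> M3 d. d3 d y = zg_zero} \<subseteq> d2 d ` M2 d"
    using ker_d3_subset_image_d2 by blast
  show "d2 d ` M2 d \<subseteq> {y \<in> M3 d. d3 d y = zg_zero}"
  proof
    fix y assume "y \<in> d2 d ` M2 d"
    then obtain z where z: "z \<in> M2 d" and y: "y = d2 d z"
      by blast
    have "d3 d y = zg_zero"
      unfolding y d2_def d3_def zg_mult_assoc[OF d_pos] one_minus_tau_mult_T_tau zg_mult_zero_right ..
    then show "y \<in> {y \<in> M3 d. d3 d y = zg_zero}"
      using d2_into_M3[OF z] y by blast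
  qed
qed

lemma image_d3_eq_M4: "d3 d ` M3 d = M4 d"
proof
  show "d3 d ` M3 d \<subseteq> M4 d"
    using d3_into_M4 by blast
  show "M4 d \<subseteq> d3 d ` M3 d"
  proof
    fix y assume "y \<in> M4 d"
    then obtain x where x: "x \<in> zg d" and y: "y = zg_mult d x (zg_mult d (BB d) (T_tau d))"
      unfolding M4_def mem_left_ideal_iff by blast
    have "y = d3 d (zg_mult d x (BB d))"
      unfolding y d3_def zg_mult_assoc[OF d_pos] ..
    moreover have "zg_mult d x (BB d) \<in> M3 d"
      unfolding M3_def mem_left_ideal_iff using x by blast
    ultimately show "y \<in> d3 d ` M3 d"
      by blast
  qed
qed

lemma zg_hom_d1: "zg_hom d (M1 d) (M2 d) (d1 d)"
  unfolding d1_def[abs_def] by (rule zg_hom_inclusion[OF M1_subset_M2])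

lemma zg_hom_d2: "zg_hom d (M2 d) (M3 d) (d2 d)"
  unfolding d2_def[abs_def] using d2_into_M3 by (intro zg_hom_mult_right[OF d_pos]) (simp add: d2_def)

lemma zg_hom_d3: "zg_hom d (M3 d) (M4 d) (d3 d)"
  unfolding d3_def[abs_def] using d3_into_M4 by (intro zg_hom_mult_right[OF d_pos]) (simp add: d3_def)

lemma zg_hom_h1: "zg_hom d (M2 d) (M1 d) (h1 d)"
  unfolding h1_def[abs_def] using h1_into_M1 by (intro zg_hom_mult_right[OF d_pos]) (simp add: h1_def)

lemma zg_hom_h3: "zg_hom d (M4 d) (M3 d) (h3 d)"
  unfolding h3_def[abs_def] by (rule zg_hom_inclusion[OF M4_subset_M3])

lemma h1_d1: "x \<in> M1 d \<Longrightarrow> h1 d (d1 d x) = zg_smult (int d) x"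
  unfolding M1_def mem_left_ideal_iff
  by (auto simp only: h1_def d1_def zg_mult_assoc[OF d_pos] T_tau_mult_T_tau zg_mult_smult_right)

lemma d3_h3: "x \<in> M4 d \<Longrightarrow> d3 d (h3 d x) = zg_smult (int d) x"
  unfolding M4_def mem_left_ideal_iff
  by (auto simp only: d3_def h3_def zg_mult_assoc[OF d_pos] T_tau_mult_T_tau zg_mult_smult_right)

end

section \<open>The homotopy \<open>h2\<close> for odd \<open>d\<close>\<close>

locale odd_dihedral = dihedral +
  assumes odd_d: "odd d"
begin

lemma int_d_eq: "int d = 2 * int ((d - 1) div 2) + 1"
  using odd_d by (auto elim: oddE)

lemma T_sig_mult_T_tau_add_h2_elem:
  "zg_mult d T_sig (zg_add (T_tau d) (h2_elem d)) = zg_smult (int d) T_sig"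
proof (rule zg_eqI[OF zg_mult_closed[OF d_pos] zg_smult_closed[OF T_sig_closed[OF d_pos]]])
  fix s k assume k: "k < d"
  have "zg_mult d T_sig (zg_add (T_tau d) (h2_elem d)) (s, k)
      = 1 + h2_coeff d k + h2_coeff d (if k = 0 then 0 else d - k)"
    unfolding zg_T_sig_mult_apply[OF zg_add_closed[OF T_tau_closed h2_elem_closed[OF d_pos]] k]
    using k d_pos
    by (cases s) (simp_all add: zg_add_def T_tau_apply h2_elem_apply_False h2_elem_apply_True)
  also have "\<dots> = (if k = 0 then int d else 0)"
    using int_d_eq k by (simp add: h2_coeff_def of_nat_diff)
  finally show "zg_mult d T_sig (zg_add (T_tau d) (h2_elem d)) (s, k) = zg_smult (int d) T_sig (s, k)"
    by (simp add: zg_smult_def T_sig_apply)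
qed

lemma h2_elem_mult_one_minus_tau_add_BB_mult_T_tau:
  "zg_add (zg_mult d (h2_elem d) (one_minus_tau d)) (zg_mult d (BB d) (T_tau d))
    = zg_smult (int d) (BB d)"
proof (rule zg_eqI[OF zg_add_closed[OF zg_mult_closed[OF d_pos] zg_mult_closed[OF d_pos]]
      zg_smult_closed[OF BB_closed[OF d_gt_1]]])
  fix s k assume k: "k < d"
  have "zg_mult d (h2_elem d) (one_minus_tau d) (s, k)
      = h2_elem d (s, k) - h2_elem d (s, if k = 0 then d - 1 else k - 1)"
    using zg_mult_one_minus_tau_apply[OF d_gt_1 h2_elem_closed[OF d_pos] k]
    unfolding cyclic_pred_eq[OF k] .
  then show "zg_add (zg_mult d (h2_elem d) (one_minus_tau d)) (zg_mult d (BB d) (T_tau d)) (s, k)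
      = zg_smult (int d) (BB d) (s, k)"
    using k d_gt_1 int_d_eq
    by (cases s; cases "k = 0"; cases "k = 1")
      (simp_all add: zg_add_def BB_mult_T_tau_apply h2_elem_apply_False h2_elem_apply_True
        zg_smult_def BB_apply[OF d_gt_1] h2_coeff_def of_nat_diff)
qed

lemma sig_tau_mult_h2_elem: "zg_mult d sig_tau (h2_elem d) = zg_smult (-1) (h2_elem d)"
proof (rule zg_eqI[OF zg_mult_closed[OF d_pos] zg_smult_closed[OF h2_elem_closed[OF d_pos]]])
  fix s k assume k: "k < d"
  have "zg_mult d sig_tau (h2_elem d) (s, k)
      = h2_elem d (\<not> s, if s then (if k = 0 then d - 1 else k - 1) else (if k = d - 1 then 0 else k + 1))"
    using zg_sig_tau_mult_apply[OF d_gt_1 k, of "h2_elem d" s]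
    by (cases s) (simp_all only: if_True if_False add.commute[of "d - 1"] cyclic_pred_eq[OF k]
        cyclic_succ_eq[OF k])
  then show "zg_mult d sig_tau (h2_elem d) (s, k) = zg_smult (-1) (h2_elem d) (s, k)"
    using k d_pos int_d_eq
    by (cases s; cases "k = 0"; cases "k = d - 1")
      (simp_all add: h2_elem_apply_False h2_elem_apply_True zg_smult_def h2_coeff_def of_nat_diff)
qed

lemma h2_elem_well_defined:
  assumes x: "x \<in> zg d" and x': "x' \<in> zg d" and eq: "zg_mult d x (BB d) = zg_mult d x' (BB d)"
  shows "zg_mult d x (h2_elem d) = zg_mult d x' (h2_elem d)"
proof -
  define z where "z = zg_sub x x'"
  have z: "z \<in> zg d"
    unfolding z_def by (rule zg_sub_closed[OF x x'])
  have z_mult: "zg_mult d z w = zg_sub (zg_mult d x w) (zg_mult d x' w)" for w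
    unfolding z_def by (rule zg_mult_sub_left)
  have "zg_mult d z (BB d) = zg_zero"
    using eq by (simp add: z_mult zg_sub_def zg_zero_def)
  moreover have "zg_mult d z (BB d) = zg_sub z (zg_mult d z sig_tau)"
    unfolding BB_def sig_mult_tau[OF d_gt_1] zg_mult_sub_right zg_mult_one_right[OF d_pos z] ..
  ultimately have z_sig_tau: "zg_mult d z sig_tau = z"
    by (auto simp: zg_sub_def zg_zero_def fun_eq_iff)
  have "zg_mult d z (h2_elem d) = zg_smult (-1) (zg_mult d z (h2_elem d))"
    by (subst (1) z_sig_tau[symmetric])
      (simp only: zg_mult_assoc[OF d_pos] sig_tau_mult_h2_elem zg_mult_smult_right)
  then have "zg_mult d z (h2_elem d) = zg_zero"
    by (auto simp: zg_smult_def zg_zero_def fun_eq_iff)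
  then show ?thesis
    by (auto simp: z_mult zg_sub_def zg_zero_def fun_eq_iff)
qed

lemma h2_mult_BB: "x \<in> zg d \<Longrightarrow> h2 d (zg_mult d x (BB d)) = zg_mult d x (h2_elem d)"
  unfolding h2_def
  by (rule someI2[of _ x]) (auto intro: h2_elem_well_defined)

lemma h2_into_M2:
  assumes "y \<in> M3 d"
  shows "h2 d y \<in> M2 d"
proof -
  obtain x where x: "x \<in> zg d" and y: "y = zg_mult d x (BB d)"
    using assms unfolding M3_def mem_left_ideal_iff by blast
  have "h2 d y = zg_mult d (zg_mult d x (h2_factor d)) T_sig"
    unfolding y h2_mult_BB[OF x] h2_elem_eq[OF d_pos] zg_mult_assoc[OF d_pos] ..
  then show ?thesis
    unfolding M2_def mem_left_ideal_iff using zg_mult_closed[OF d_pos] by blast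
qed

lemma zg_hom_h2: "zg_hom d (M3 d) (M2 d) (h2 d)"
  unfolding zg_hom_def
proof (intro conjI ballI)
  fix y assume "y \<in> M3 d"
  then show "h2 d y \<in> M2 d"
    by (rule h2_into_M2)
next
  fix y y' assume "y \<in> M3 d" "y' \<in> M3 d"
  then obtain x x' where "x \<in> zg d" "y = zg_mult d x (BB d)" "x' \<in> zg d" "y' = zg_mult d x' (BB d)"
    unfolding M3_def mem_left_ideal_iff by blast
  then show "h2 d (zg_add y y') = zg_add (h2 d y) (h2 d y')"
    by (simp add: zg_mult_add_left[symmetric] h2_mult_BB zg_add_closed)
next
  fix r y assume "r \<in> zg d" "y \<in> M3 d"
  then obtain x where "x \<in> zg d" "y = zg_mult d x (BB d)"
    unfolding M3_def mem_left_ideal_iff by blast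
  with \<open>r \<in> zg d\<close> show "h2 d (zg_mult d r y) = zg_mult d r (h2 d y)"
    by (simp add: zg_mult_assoc[OF d_pos, symmetric] h2_mult_BB zg_mult_closed[OF d_pos])
qed

lemma d1_h1_add_h2_d2:
  assumes x: "x \<in> M2 d"
  shows "zg_add (d1 d (h1 d x)) (h2 d (d2 d x)) = zg_smult (int d) x"
proof -
  from x obtain w where "w \<in> zg d" and w: "x = zg_mult d w T_sig"
    unfolding M2_def mem_left_ideal_iff by blast
  have "h2 d (d2 d x) = zg_mult d x (h2_elem d)"
    unfolding d2_def M2_mult_one_minus_tau[OF x]
    using x left_ideal_closed[OF d_pos] by (simp add: M2_def h2_mult_BB)
  then have "zg_add (d1 d (h1 d x)) (h2 d (d2 d x)) = zg_mult d x (zg_add (T_tau d) (h2_elem d))"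
    by (simp add: d1_def h1_def zg_mult_add_right)
  also have "\<dots> = zg_smult (int d) x"
    unfolding w zg_mult_assoc[OF d_pos] T_sig_mult_T_tau_add_h2_elem zg_mult_smult_right ..
  finally show ?thesis .
qed

lemma d2_h2_add_h3_d3:
  assumes "y \<in> M3 d"
  shows "zg_add (d2 d (h2 d y)) (h3 d (d3 d y)) = zg_smult (int d) y"
proof -
  from assms obtain x where x: "x \<in> zg d" and y: "y = zg_mult d x (BB d)"
    unfolding M3_def mem_left_ideal_iff by blast
  have "zg_add (d2 d (h2 d y)) (h3 d (d3 d y))
      = zg_mult d x (zg_add (zg_mult d (h2_elem d) (one_minus_tau d)) (zg_mult d (BB d) (T_tau d)))"
    unfolding y d2_def h3_def d3_def h2_mult_BB[OF x] zg_mult_assoc[OF d_pos] zg_mult_add_right ..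
  also have "\<dots> = zg_smult (int d) y"
    unfolding h2_elem_mult_one_minus_tau_add_BB_mult_T_tau zg_mult_smult_right y ..
  finally show ?thesis .
qed

end

theorem theorem5p4:
  fixes d :: nat
  assumes "odd d" and "d \<ge> 3"
  shows
    \<comment> \<open>exactness of 0 -> M1 -> M2 -> M3 -> M4 -> 0\<close>
    "inj_on (d1 d) (M1 d)
     \<and> {y \<in> M2 d. d2 d y = zg_zero} = d1 d ` M1 d
     \<and> {y \<in> M3 d. d3 d y = zg_zero} = d2 d ` M2 d
     \<and> d3 d ` M3 d = M4 d
     \<comment> \<open>well-definedness of h2\<close>
     \<and> (\<forall>x\<in>zg d. \<forall>x'\<in>zg d. zg_mult d x (BB d) = zg_mult d x' (BB d)
            \<longrightarrow> zg_mult d x (h2_elem d) = zg_mult d x' (h2_elem d))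
     \<comment> \<open>module homomorphisms\<close>
     \<and> zg_hom d (M1 d) (M2 d) (d1 d)
     \<and> zg_hom d (M2 d) (M3 d) (d2 d)
     \<and> zg_hom d (M3 d) (M4 d) (d3 d)
     \<and> zg_hom d (M2 d) (M1 d) (h1 d)
     \<and> zg_hom d (M3 d) (M2 d) (h2 d)
     \<and> zg_hom d (M4 d) (M3 d) (h3 d)
     \<comment> \<open>prism conditions\<close>
     \<and> (\<forall>x\<in>M1 d. h1 d (d1 d x) = zg_smult (int d) x)
     \<and> (\<forall>x\<in>M2 d. zg_add (d1 d (h1 d x)) (h2 d (d2 d x)) = zg_smult (int d) x)
     \<and> (\<forall>x\<in>M3 d. zg_add (d2 d (h2 d x)) (h3 d (d3 d x)) = zg_smult (int d) x)
     \<and> (\<forall>x\<in>M4 d. d3 d (h3 d x) = zg_smult (int d) x)"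
proof -
  interpret odd_dihedral d
    using assms by unfold_locales auto
  show ?thesis
    by (intro conjI ballI impI inj_onI ker_d2_eq_image_d1 ker_d3_eq_image_d2 image_d3_eq_M4
        zg_hom_d1 zg_hom_d2 zg_hom_d3 zg_hom_h1 zg_hom_h2 zg_hom_h3
        h2_elem_well_defined h1_d1 d1_h1_add_h2_d2 d2_h2_add_h3_d3 d3_h3)
      (simp_all add: d1_def)
qed

end
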